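(* Let $G$ be a topological group. (i) Let $X$ be a discrete space with a continuous $G$-action and $c:G\times X\to\mathbf S^1$ a continuous cocycle. Then the representation $\lambda_X^c$ of $G$ on $\ell_2(X)$ is unitarily equivalent to a direct sum of monomial representations $\mathrm{Ind}_H^G\chi$ associated to open subgroups $H$ of $G$ (and unitary characters $\chi$ of $H$). (ii) Let $\pi=\bigoplus_{i\in I}\mathrm{Ind}_{H_i}^G\chi_i$ be a direct sum of monomial representations associated to open subgroups $H_i$ of $G$ and unitary characters $\chi_i$ of $H_i$. Let $X=\coprod_{i\in I}G/H_i$ with the natural $G$-action. Then $\pi$ is unitarily equivalent to $\lambda_X^c$ for some cocycle $c:G\times X\to\mathbf S^1$.
   Context: An action of $G$ on a discrete space $X$ is continuous iff all point stabilizers are open. A cocycle $c:G\times X\to\mathbf S^1$ satisfies $c(g_1g_2,x)=c(g_1,g_2x)c(g_2,x)$ for all $g_1,g_2\in G$, $x\in X$. The twisted permutation representation $\lambda_X^c$ on $\ell_2(X)$ is $\lambda_X^c(g)f(x)=c(g^{-1},x)f(g^{-1}x)$. A monomial representation is an induced representation $\mathrm{Ind}_H^G\chi$ with $\chi:H\to\mathbf S^1$ a (continuous) unitary character. *)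

theory Defs
  imports "HOL-Analysis.Analysis" "HOL-Algebra.Left_Coset"
begin

definition topological_group :: "('g, 'b) monoid_scheme \<Rightarrow> 'g topology \<Rightarrow> bool" where
  "topological_group G T \<longleftrightarrow> group G \<and> topspace T = carrier G \<and>
     continuous_map (prod_topology T T) T (\<lambda>(x, y). x \<otimes>\<^bsub>G\<^esub> y) \<and>
     continuous_map T T (\<lambda>x. inv\<^bsub>G\<^esub> x)"

definition open_subgroup :: "('g, 'b) monoid_scheme \<Rightarrow> 'g topology \<Rightarrow> 'g set \<Rightarrow> bool" where
  "open_subgroup G T H \<longleftrightarrow> subgroup H G \<and> openin T H"

definition unitary_character ::
  "('g, 'b) monoid_scheme \<Rightarrow> 'g topology \<Rightarrow> 'g set \<Rightarrow> ('g \<Rightarrow> complex) \<Rightarrow> bool" where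
  "unitary_character G T H chi \<longleftrightarrow>
     (\<forall>h\<in>H. cmod (chi h) = 1) \<and>
     (\<forall>h1\<in>H. \<forall>h2\<in>H. chi (h1 \<otimes>\<^bsub>G\<^esub> h2) = chi h1 * chi h2) \<and>
     continuous_map (subtopology T H) euclidean chi"

definition is_action :: "('g, 'b) monoid_scheme \<Rightarrow> 'x set \<Rightarrow> ('g \<Rightarrow> 'x \<Rightarrow> 'x) \<Rightarrow> bool" where
  "is_action G X \<phi> \<longleftrightarrow>
     (\<forall>g\<in>carrier G. \<forall>x\<in>X. \<phi> g x \<in> X) \<and>
     (\<forall>x\<in>X. \<phi> \<one>\<^bsub>G\<^esub> x = x) \<and>
     (\<forall>g1\<in>carrier G. \<forall>g2\<in>carrier G. \<forall>x\<in>X. \<phi> (g1 \<otimes>\<^bsub>G\<^esub> g2) x = \<phi> g1 (\<phi> g2 x))"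

definition continuous_action ::
  "('g, 'b) monoid_scheme \<Rightarrow> 'g topology \<Rightarrow> 'x set \<Rightarrow> ('g \<Rightarrow> 'x \<Rightarrow> 'x) \<Rightarrow> bool" where
  "continuous_action G T X \<phi> \<longleftrightarrow> is_action G X \<phi> \<and>
     continuous_map (prod_topology T (discrete_topology X)) (discrete_topology X) (\<lambda>(g, x). \<phi> g x)"

definition cocycle ::
  "('g, 'b) monoid_scheme \<Rightarrow> 'x set \<Rightarrow> ('g \<Rightarrow> 'x \<Rightarrow> 'x) \<Rightarrow> ('g \<Rightarrow> 'x \<Rightarrow> complex) \<Rightarrow> bool" where
  "cocycle G X \<phi> c \<longleftrightarrow>
     (\<forall>g\<in>carrier G. \<forall>x\<in>X. cmod (c g x) = 1) \<and>
     (\<forall>g1\<in>carrier G. \<forall>g2\<in>carrier G. \<forall>x\<in>X.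
        c (g1 \<otimes>\<^bsub>G\<^esub> g2) x = c g1 (\<phi> g2 x) * c g2 x)"

definition continuous_cocycle ::
  "('g, 'b) monoid_scheme \<Rightarrow> 'g topology \<Rightarrow> 'x set \<Rightarrow> ('g \<Rightarrow> 'x \<Rightarrow> 'x) \<Rightarrow> ('g \<Rightarrow> 'x \<Rightarrow> complex) \<Rightarrow> bool" where
  "continuous_cocycle G T X \<phi> c \<longleftrightarrow> cocycle G X \<phi> c \<and>
     continuous_map (prod_topology T (discrete_topology X)) euclidean (\<lambda>(g, x). c g x)"

text \<open>A representation is given concretely by a space V of complex-valued functions
 (a complex vector space under pointwise operations), its norm N, and the action \<pi>.
 Unitary equivalence: a linear, norm-preserving bijection intertwining the actions
 (norm preservation of a linear map is equivalent to preservation of the inner product).\<close>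
definition unitarily_equivalent ::
  "('g, 'b) monoid_scheme \<Rightarrow>
   ('a \<Rightarrow> complex) set \<Rightarrow> (('a \<Rightarrow> complex) \<Rightarrow> real) \<Rightarrow> ('g \<Rightarrow> ('a \<Rightarrow> complex) \<Rightarrow> ('a \<Rightarrow> complex)) \<Rightarrow>
   ('c \<Rightarrow> complex) set \<Rightarrow> (('c \<Rightarrow> complex) \<Rightarrow> real) \<Rightarrow> ('g \<Rightarrow> ('c \<Rightarrow> complex) \<Rightarrow> ('c \<Rightarrow> complex)) \<Rightarrow> bool" where
  "unitarily_equivalent G V1 N1 \<pi>1 V2 N2 \<pi>2 \<longleftrightarrow>
     (\<exists>U. bij_betw U V1 V2 \<and>
        (\<forall>f\<in>V1. \<forall>h\<in>V1. \<forall>a b. U (\<lambda>x. a * f x + b * h x) = (\<lambda>y. a * U f y + b * U h y)) \<and>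
        (\<forall>f\<in>V1. N2 (U f) = N1 f) \<and>
        (\<forall>g\<in>carrier G. \<forall>f\<in>V1. U (\<pi>1 g f) = \<pi>2 g (U f)))"

definition l2 :: "'x set \<Rightarrow> ('x \<Rightarrow> complex) set" where
  "l2 X = {f. (\<forall>x. x \<notin> X \<longrightarrow> f x = 0) \<and> (\<lambda>x. (cmod (f x))\<^sup>2) summable_on X}"

definition l2norm :: "'x set \<Rightarrow> ('x \<Rightarrow> complex) \<Rightarrow> real" where
  "l2norm X f = sqrt (infsum (\<lambda>x. (cmod (f x))\<^sup>2) X)"

definition twisted_perm ::
  "('g, 'b) monoid_scheme \<Rightarrow> 'x set \<Rightarrow> ('g \<Rightarrow> 'x \<Rightarrow> 'x) \<Rightarrow> ('g \<Rightarrow> 'x \<Rightarrow> complex) \<Rightarrow>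
   'g \<Rightarrow> ('x \<Rightarrow> complex) \<Rightarrow> ('x \<Rightarrow> complex)" where
  "twisted_perm G X \<phi> c g f =
     (\<lambda>x. if x \<in> X then c (inv\<^bsub>G\<^esub> g) x * f (\<phi> (inv\<^bsub>G\<^esub> g) x) else 0)"

subsection \<open>Monomial representations Ind_H^G chi for open H (G/H discrete, counting measure)\<close>

definition ind_space :: "('g, 'b) monoid_scheme \<Rightarrow> 'g set \<Rightarrow> ('g \<Rightarrow> complex) \<Rightarrow> ('g \<Rightarrow> complex) set" where
  "ind_space G H chi = {f. (\<forall>g. g \<notin> carrier G \<longrightarrow> f g = 0) \<and>
      (\<forall>g\<in>carrier G. \<forall>h\<in>H. f (g \<otimes>\<^bsub>G\<^esub> h) = inverse (chi h) * f g) \<and>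
      (\<lambda>C. (cmod (f (SOME g. g \<in> C)))\<^sup>2) summable_on (lcosets\<^bsub>G\<^esub> H)}"

definition ind_normsq :: "('g, 'b) monoid_scheme \<Rightarrow> 'g set \<Rightarrow> ('g \<Rightarrow> complex) \<Rightarrow> real" where
  "ind_normsq G H f = infsum (\<lambda>C. (cmod (f (SOME g. g \<in> C)))\<^sup>2) (lcosets\<^bsub>G\<^esub> H)"

definition dsum_space ::
  "('g, 'b) monoid_scheme \<Rightarrow> 'i set \<Rightarrow> ('i \<Rightarrow> 'g set) \<Rightarrow> ('i \<Rightarrow> 'g \<Rightarrow> complex) \<Rightarrow> ('i \<times> 'g \<Rightarrow> complex) set" where
  "dsum_space G I H chi = {F. (\<forall>i x. i \<notin> I \<longrightarrow> F (i, x) = 0) \<and>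
      (\<forall>i\<in>I. (\<lambda>x. F (i, x)) \<in> ind_space G (H i) (chi i)) \<and>
      (\<lambda>i. ind_normsq G (H i) (\<lambda>x. F (i, x))) summable_on I}"

definition dsum_norm ::
  "('g, 'b) monoid_scheme \<Rightarrow> 'i set \<Rightarrow> ('i \<Rightarrow> 'g set) \<Rightarrow> ('i \<times> 'g \<Rightarrow> complex) \<Rightarrow> real" where
  "dsum_norm G I H F = sqrt (infsum (\<lambda>i. ind_normsq G (H i) (\<lambda>x. F (i, x))) I)"

definition dsum_action ::
  "('g, 'b) monoid_scheme \<Rightarrow> 'g \<Rightarrow> ('i \<times> 'g \<Rightarrow> complex) \<Rightarrow> ('i \<times> 'g \<Rightarrow> complex)" where
  "dsum_action G g F = (\<lambda>(i, x). if x \<in> carrier G then F (i, inv\<^bsub>G\<^esub> g \<otimes>\<^bsub>G\<^esub> x) else 0)"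

definition coset_union :: "('g, 'b) monoid_scheme \<Rightarrow> 'i set \<Rightarrow> ('i \<Rightarrow> 'g set) \<Rightarrow> ('i \<times> 'g set) set" where
  "coset_union G I H = {(i, C). i \<in> I \<and> C \<in> lcosets\<^bsub>G\<^esub> (H i)}"

definition coset_action :: "('g, 'b) monoid_scheme \<Rightarrow> 'g \<Rightarrow> ('i \<times> 'g set) \<Rightarrow> ('i \<times> 'g set)" where
  "coset_action G g p = (fst p, g <#\<^bsub>G\<^esub> snd p)"

end

theory Submission
  imports Defs
begin

text \<open>Pick a point x_i in every G-orbit of X. Its stabiliser H_i is open because the action
  is continuous and X is discrete, and by the cocycle identity chi_i(h) = c(h, x_i)^-1 is a
  unitary character of H_i. As gH_i \<mapsto> g x_i identifies the disjoint union of the G/H_i with X,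
  the map f \<mapsto> ((i, g) \<mapsto> c(g, x_i) f(g x_i)) is a unitary from l2(X) onto the direct sum of the
  Ind_{H_i}^G chi_i, and the cocycle identity makes it intertwine the two actions.
  Conversely, on X = the disjoint union of the G/H_i, a section s of G \<rightarrow> G/H_i with s(H_i) = 1
  gives the cocycle c(g, C) = chi_i(s(gC)^-1 g s(C))^-1, which takes the values chi_i^-1 at the
  base points H_i; so the first construction applies to it.\<close>

lemma summable_on_reindex_Sigma_iff:
  fixes F :: "'x \<Rightarrow> real"
  assumes bij: "bij_betw \<Phi> (Sigma A B) X" and nonneg: "\<And>x. x \<in> X \<Longrightarrow> F x \<ge> 0"
  shows "F summable_on X \<longleftrightarrow>
     (\<forall>i\<in>A. (\<lambda>y. F (\<Phi> (i, y))) summable_on B i) \<and>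
     (\<lambda>i. infsum (\<lambda>y. F (\<Phi> (i, y))) (B i)) summable_on A" (is "_ \<longleftrightarrow> ?inner \<and> ?outer")
proof -
  have reindex: "F summable_on X \<longleftrightarrow> (\<lambda>p. F (\<Phi> p)) summable_on Sigma A B"
    using summable_on_reindex_bij_betw[OF bij, of F] by simp
  show ?thesis
  proof
    assume "F summable_on X"
    hence sum: "(\<lambda>p. F (\<Phi> p)) summable_on Sigma A B" using reindex by simp
    have ?inner
      using summable_on_SigmaD1[of "\<lambda>i y. F (\<Phi> (i, y))"] sum by (simp add: case_prod_unfold)
    with summable_on_SigmaD[OF sum] show "?inner \<and> ?outer" by simp
  next
    assume "?inner \<and> ?outer"
    moreover have "\<And>p. p \<in> Sigma A B \<Longrightarrow> F (\<Phi> p) \<ge> 0"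
      using bij nonneg by (auto simp: bij_betw_def)
    ultimately have "(\<lambda>p. F (\<Phi> p)) summable_on Sigma A B"
      by (intro summable_on_SigmaI[where g="\<lambda>i. infsum (\<lambda>y. F (\<Phi> (i, y))) (B i)"]) auto
    thus "F summable_on X" using reindex by simp
  qed
qed

lemma infsum_reindex_Sigma:
  fixes F :: "'x \<Rightarrow> 'c::banach"
  assumes bij: "bij_betw \<Phi> (Sigma A B) X" and sum: "F summable_on X"
  shows "infsum (\<lambda>i. infsum (\<lambda>y. F (\<Phi> (i, y))) (B i)) A = infsum F X"
proof -
  have "(\<lambda>p. F (\<Phi> p)) summable_on Sigma A B"
    using summable_on_reindex_bij_betw[OF bij, of F] sum by simp
  hence "infsum (\<lambda>i. infsum (\<lambda>y. F (\<Phi> (i, y))) (B i)) A = infsum (\<lambda>p. F (\<Phi> p)) (Sigma A B)"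
    by (rule infsum_Sigma_banach)
  also have "\<dots> = infsum F X"
    using infsum_reindex_bij_betw[OF bij, of F] by simp
  finally show ?thesis .
qed

lemma continuous_map_fix_discrete_snd:
  assumes "continuous_map (prod_topology T (discrete_topology X)) Y (\<lambda>(g, x). f g x)"
    and "x \<in> X"
  shows "continuous_map T Y (\<lambda>g. f g x)"
proof -
  have "continuous_map T (prod_topology T (discrete_topology X)) (\<lambda>g. (g, x))"
    using \<open>x \<in> X\<close> by (intro continuous_map_pairedI continuous_map_id[unfolded id_def]) auto
  from continuous_map_compose[OF this assms(1)] show ?thesis by (simp add: o_def)
qed

lemma is_actionD:
  assumes "is_action G X \<phi>"
  shows action_closed: "\<lbrakk>g \<in> carrier G; x \<in> X\<rbrakk> \<Longrightarrow> \<phi> g x \<in> X"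
    and action_one: "x \<in> X \<Longrightarrow> \<phi> \<one>\<^bsub>G\<^esub> x = x"
    and action_mult: "\<lbrakk>g1 \<in> carrier G; g2 \<in> carrier G; x \<in> X\<rbrakk> \<Longrightarrow>
           \<phi> (g1 \<otimes>\<^bsub>G\<^esub> g2) x = \<phi> g1 (\<phi> g2 x)"
  using assms by (auto simp: is_action_def)

lemma cocycleD:
  assumes "cocycle G X \<phi> c"
  shows cocycle_norm: "\<lbrakk>g \<in> carrier G; x \<in> X\<rbrakk> \<Longrightarrow> cmod (c g x) = 1"
    and cocycle_mult: "\<lbrakk>g1 \<in> carrier G; g2 \<in> carrier G; x \<in> X\<rbrakk> \<Longrightarrow>
           c (g1 \<otimes>\<^bsub>G\<^esub> g2) x = c g1 (\<phi> g2 x) * c g2 x"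
    and cocycle_nonzero: "\<lbrakk>g \<in> carrier G; x \<in> X\<rbrakk> \<Longrightarrow> c g x \<noteq> 0"
  using assms by (auto simp: cocycle_def) (metis norm_zero zero_neq_one)

definition stabilizer :: "('g, 'b) monoid_scheme \<Rightarrow> ('g \<Rightarrow> 'x \<Rightarrow> 'x) \<Rightarrow> 'x \<Rightarrow> 'g set" where
  "stabilizer G \<phi> x = {g \<in> carrier G. \<phi> g x = x}"

context group
begin

lemma action_inv_cancel:
  assumes "is_action G X \<phi>" "g \<in> carrier G" "x \<in> X"
  shows "\<phi> (inv g) (\<phi> g x) = x"
  using assms action_mult[OF assms(1), of "inv g" g x, symmetric] action_one[OF assms(1)] by simp

lemma action_orbit_eq:
  assumes act: "is_action G X \<phi>" and g: "g \<in> carrier G" and x: "x \<in> X"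
  shows "(\<lambda>k. \<phi> k (\<phi> g x)) ` carrier G = (\<lambda>k. \<phi> k x) ` carrier G"
proof
  have "\<phi> k (\<phi> g x) = \<phi> (k \<otimes> g) x" if "k \<in> carrier G" for k
    using that action_mult[OF act _ g x] by simp
  thus "(\<lambda>k. \<phi> k (\<phi> g x)) ` carrier G \<subseteq> (\<lambda>k. \<phi> k x) ` carrier G"
    using g by blast
  have "\<phi> k x = \<phi> (k \<otimes> inv g) (\<phi> g x)" if "k \<in> carrier G" for k
    using that action_mult[OF act] action_closed[OF act] action_inv_cancel[OF act g x] g x by simp
  thus "(\<lambda>k. \<phi> k x) ` carrier G \<subseteq> (\<lambda>k. \<phi> k (\<phi> g x)) ` carrier G"
    using g by blast
qed

lemma orbit_representatives:
  assumes act: "is_action G X \<phi>"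
  obtains I where "I \<subseteq> X"
    and "\<And>x. x \<in> X \<Longrightarrow> \<exists>i\<in>I. \<exists>g\<in>carrier G. x = \<phi> g i"
    and "\<And>i j g. \<lbrakk>i \<in> I; j \<in> I; g \<in> carrier G; \<phi> g i = j\<rbrakk> \<Longrightarrow> i = j"
proof
  define orbit where "orbit x = (\<lambda>k. \<phi> k x) ` carrier G" for x
  define r where "r x = (SOME y. y \<in> orbit x)" for x
  have self: "x \<in> orbit x" if "x \<in> X" for x
    using that action_one[OF act] unfolding orbit_def by force
  have r_orbit: "r x \<in> orbit x" and orbit_r: "orbit (r x) = orbit x" if "x \<in> X" for x
  proof -
    show "r x \<in> orbit x" unfolding r_def using self[OF that] by (rule someI)
    then obtain k where "k \<in> carrier G" "r x = \<phi> k x" by (auto simp: orbit_def)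
    then show "orbit (r x) = orbit x"
      using action_orbit_eq[OF act _ that] unfolding orbit_def by simp
  qed
  show "r ` X \<subseteq> X"
    using r_orbit action_closed[OF act] by (force simp: orbit_def)
  show "\<exists>i\<in>r ` X. \<exists>g\<in>carrier G. x = \<phi> g i" if "x \<in> X" for x
  proof -
    have "x \<in> orbit (r x)" using self[OF that] orbit_r[OF that] by simp
    with that show ?thesis by (auto simp: orbit_def)
  qed
  show "i = j" if ij: "i \<in> r ` X" "j \<in> r ` X" "g \<in> carrier G" "\<phi> g i = j" for i j g
  proof -
    obtain x y where xy: "x \<in> X" "i = r x" "y \<in> X" "j = r y" using ij by blast
    have "orbit j = orbit i"
      using ij xy r_orbit action_orbit_eq[OF act] \<open>r ` X \<subseteq> X\<close> unfolding orbit_def by blast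
    thus "i = j" using xy orbit_r by (simp add: r_def)
  qed
qed

lemma stabilizer_subgroup:
  assumes act: "is_action G X \<phi>" and x: "x \<in> X"
  shows "subgroup (stabilizer G \<phi> x) G"
proof
  show "inv h \<in> stabilizer G \<phi> x" if "h \<in> stabilizer G \<phi> x" for h
    using that action_inv_cancel[OF act _ x, of h] by (simp add: stabilizer_def)
qed (use action_mult[OF act] action_one[OF act] x in \<open>auto simp: stabilizer_def\<close>)

lemma lcosets_repr:
  assumes H: "subgroup H G" and C: "C \<in> lcosets H" and a: "a \<in> C"
  shows "a \<in> carrier G" "C = a <# H"
proof -
  obtain b where "b \<in> carrier G" "C = b <# H" using C by (auto simp: LCOSETS_def)
  then show "a \<in> carrier G" "C = a <# H"
    using H a l_coset_carrier l_repr_independence by blast+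
qed

lemma some_elem_lcosets:
  assumes "subgroup H G" "C \<in> lcosets H"
  shows "some_elem C \<in> C"
proof -
  obtain b where "b \<in> carrier G" "C = b <# H" using assms(2) by (auto simp: LCOSETS_def)
  then have "b \<in> C" using lcos_self assms(1) by blast
  then show ?thesis by (auto intro: some_elem_nonempty)
qed

lemma l_coset_in_lcosets:
  assumes "subgroup H G" "g \<in> carrier G" "C \<in> lcosets H"
  shows "g <# C \<in> lcosets H"
proof -
  obtain b where b: "b \<in> carrier G" "C = b <# H" using assms(3) by (auto simp: LCOSETS_def)
  then have "g <# C = (g \<otimes> b) <# H" using assms lcos_m_assoc subgroup.subset by metis
  with assms(2) b(1) show ?thesis by (auto simp: LCOSETS_def)
qed

end

locale orbit_decomposition = group G
  for G :: "('g, 'b) monoid_scheme" (structure) +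
  fixes X :: "'x set" and \<phi> :: "'g \<Rightarrow> 'x \<Rightarrow> 'x" and c :: "'g \<Rightarrow> 'x \<Rightarrow> complex"
    and I :: "'i set" and xr :: "'i \<Rightarrow> 'x" and H :: "'i \<Rightarrow> 'g set" and chi :: "'i \<Rightarrow> 'g \<Rightarrow> complex"
  assumes action: "is_action G X \<phi>" and cocycle: "cocycle G X \<phi> c"
    and xr_in: "i \<in> I \<Longrightarrow> xr i \<in> X"
    and orbit_cover: "x \<in> X \<Longrightarrow> \<exists>i\<in>I. \<exists>g\<in>carrier G. x = \<phi> g (xr i)"
    and orbit_disjoint: "\<lbrakk>i \<in> I; j \<in> I; g \<in> carrier G; \<phi> g (xr i) = xr j\<rbrakk> \<Longrightarrow> i = j"
    and H_stabilizer: "i \<in> I \<Longrightarrow> H i = stabilizer G \<phi> (xr i)"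
    and chi_cocycle: "\<lbrakk>i \<in> I; h \<in> H i\<rbrakk> \<Longrightarrow> chi i h = inverse (c h (xr i))"
begin

lemmas act_closed = action_closed[OF action]
  and act_mult = action_mult[OF action]
  and c_norm = cocycle_norm[OF cocycle]
  and c_mult = cocycle_mult[OF cocycle]
  and c_nonzero = cocycle_nonzero[OF cocycle]

lemma H_subgroup: "i \<in> I \<Longrightarrow> subgroup (H i) G"
  using stabilizer_subgroup[OF action xr_in] H_stabilizer by simp

lemma H_fixes: "\<lbrakk>i \<in> I; h \<in> H i\<rbrakk> \<Longrightarrow> h \<in> carrier G \<and> \<phi> h (xr i) = xr i"
  using H_stabilizer by (simp add: stabilizer_def)

lemma some_elem_coset:
  assumes "i \<in> I" "C \<in> lcosets (H i)"
  shows "some_elem C \<in> carrier G" "C = some_elem C <# H i"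
  using lcosets_repr[OF H_subgroup assms(2) some_elem_lcosets] H_subgroup assms by blast+

definition coset_point :: "'i \<times> 'g set \<Rightarrow> 'x" where
  "coset_point p = \<phi> (some_elem (snd p)) (xr (fst p))"

lemma coset_point_l_coset:
  assumes i: "i \<in> I" and g: "g \<in> carrier G"
  shows "coset_point (i, g <# H i) = \<phi> g (xr i)"
proof -
  have "some_elem (g <# H i) \<in> g <# H i"
    using some_elem_lcosets[OF H_subgroup[OF i]] g by (auto simp: LCOSETS_def)
  then obtain h where h: "h \<in> H i" "some_elem (g <# H i) = g \<otimes> h" by (auto simp: l_coset_def)
  then show ?thesis
    using act_mult[OF g _ xr_in[OF i]] H_fixes[OF i h(1)] by (simp add: coset_point_def)
qed

lemma bij_betw_coset_point: "bij_betw coset_point (Sigma I (\<lambda>i. lcosets (H i))) X"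
proof (rule bij_betw_imageI)
  show "inj_on coset_point (Sigma I (\<lambda>i. lcosets (H i)))"
  proof (rule inj_onI, clarify)
    fix i C j D
    assume i: "i \<in> I" "C \<in> lcosets (H i)" and j: "j \<in> I" "D \<in> lcosets (H j)"
      and eq: "coset_point (i, C) = coset_point (j, D)"
    obtain a b where a: "a \<in> carrier G" "C = a <# H i" and b: "b \<in> carrier G" "D = b <# H j"
      and eq': "\<phi> a (xr i) = \<phi> b (xr j)"
      using some_elem_coset[OF i] some_elem_coset[OF j] eq by (auto simp: coset_point_def)
    have "\<phi> (inv b \<otimes> a) (xr i) = \<phi> (inv b) (\<phi> b (xr j))"
      using eq' a(1) b(1) act_mult xr_in i by simp
    also have "\<dots> = xr j" using action_inv_cancel[OF action b(1) xr_in[OF j(1)]] .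
    finally have ba: "\<phi> (inv b \<otimes> a) (xr i) = xr j" .
    then have ij: "i = j" using orbit_disjoint[OF i(1) j(1)] a(1) b(1) by blast
    with ba have "inv b \<otimes> a \<in> H i" using H_stabilizer[OF i(1)] a b by (simp add: stabilizer_def)
    then have "a \<in> b <# H i" using subgroup.lcos_module_rev[OF H_subgroup[OF i(1)] is_group] a b by simp
    then have "C = D" using a b ij l_repr_independence H_subgroup[OF i(1)] by metis
    with ij show "i = j \<and> C = D" by simp
  qed
  show "coset_point ` Sigma I (\<lambda>i. lcosets (H i)) = X"
  proof
    show "coset_point ` Sigma I (\<lambda>i. lcosets (H i)) \<subseteq> X"
      using some_elem_coset act_closed xr_in by (auto simp: coset_point_def)
    show "X \<subseteq> coset_point ` Sigma I (\<lambda>i. lcosets (H i))"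
    proof
      fix x assume "x \<in> X"
      then obtain i g where "i \<in> I" "g \<in> carrier G" "x = \<phi> g (xr i)"
        using orbit_cover by blast
      then have "x = coset_point (i, g <# H i)" "i \<in> I" "g \<in> carrier G"
        using coset_point_l_coset by simp_all
      then show "x \<in> coset_point ` Sigma I (\<lambda>i. lcosets (H i))"
        by (auto simp: LCOSETS_def)
    qed
  qed
qed

lemma inv_coset_point:
  assumes "i \<in> I" "g \<in> carrier G"
  shows "inv_into (Sigma I (\<lambda>i. lcosets (H i))) coset_point (\<phi> g (xr i)) = (i, g <# H i)"
proof -
  have "(i, g <# H i) \<in> Sigma I (\<lambda>i. lcosets (H i))" using assms by (auto simp: LCOSETS_def)
  with bij_betw_coset_point show ?thesis
    using coset_point_l_coset[OF assms] by (metis bij_betw_imp_inj_on inv_into_f_f)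
qed

definition chi_covariant :: "('i \<times> 'g \<Rightarrow> complex) \<Rightarrow> 'i \<Rightarrow> bool" where
  "chi_covariant D i \<longleftrightarrow> (\<forall>g\<in>carrier G. \<forall>h\<in>H i. D (i, g \<otimes> h) = inverse (chi i h) * D (i, g))"

definition to_induced :: "('x \<Rightarrow> complex) \<Rightarrow> 'i \<times> 'g \<Rightarrow> complex" where
  "to_induced F = (\<lambda>(i, g). if i \<in> I \<and> g \<in> carrier G then c g (xr i) * F (\<phi> g (xr i)) else 0)"

text \<open>The inverse of to_induced on chi-covariant functions: x is g x_i for g in the unique coset
  (i, C) over x, and covariance makes the value independent of the choice of g in C.\<close>
definition from_induced :: "('i \<times> 'g \<Rightarrow> complex) \<Rightarrow> 'x \<Rightarrow> complex" where
  "from_induced D = (\<lambda>x. if x \<in> X then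
     (case inv_into (Sigma I (\<lambda>i. lcosets (H i))) coset_point x of
        (i, C) \<Rightarrow> D (i, some_elem C) / c (some_elem C) (xr i))
     else 0)"

lemma from_induced_orbit:
  assumes i: "i \<in> I" and g: "g \<in> carrier G" and D: "chi_covariant D i"
  shows "from_induced D (\<phi> g (xr i)) = D (i, g) / c g (xr i)"
proof -
  define r where "r = some_elem (g <# H i)"
  define h where "h = inv g \<otimes> r"
  have "r \<in> g <# H i"
    unfolding r_def using some_elem_lcosets[OF H_subgroup[OF i]] g by (auto simp: LCOSETS_def)
  then have h: "h \<in> H i" "g \<otimes> h = r"
    using subgroup.lcos_module_imp[OF H_subgroup[OF i] is_group g] g
      l_coset_carrier[OF _ g H_subgroup[OF i]] by (auto simp: h_def m_assoc[symmetric])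
  note h_fix = H_fixes[OF i h(1)]
  have "from_induced D (\<phi> g (xr i)) = D (i, r) / c r (xr i)"
    using act_closed[OF g xr_in[OF i]] inv_coset_point[OF i g] by (simp add: from_induced_def r_def)
  also have "D (i, r) = c h (xr i) * D (i, g)"
    using D g h chi_cocycle[OF i h(1)] by (auto simp: chi_covariant_def)
  also have "c r (xr i) = c g (xr i) * c h (xr i)"
    using c_mult[OF g _ xr_in[OF i]] h h_fix by auto
  finally show ?thesis using c_nonzero[OF _ xr_in[OF i]] h_fix by simp
qed

lemma chi_covariant_to_induced: "i \<in> I \<Longrightarrow> chi_covariant (to_induced F) i"
  unfolding chi_covariant_def
proof (intro ballI)
  fix g h assume i: "i \<in> I" and g: "g \<in> carrier G" and h: "h \<in> H i"
  note h_fix = H_fixes[OF i h]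
  have "to_induced F (i, g \<otimes> h) = c (g \<otimes> h) (xr i) * F (\<phi> (g \<otimes> h) (xr i))"
    using i g h_fix by (simp add: to_induced_def)
  also have "\<dots> = c h (xr i) * (c g (xr i) * F (\<phi> g (xr i)))"
    using c_mult[OF g _ xr_in[OF i]] act_mult[OF g _ xr_in[OF i]] h_fix by simp
  also have "\<dots> = inverse (chi i h) * to_induced F (i, g)"
    using chi_cocycle[OF i h] i g by (simp add: to_induced_def)
  finally show "to_induced F (i, g \<otimes> h) = inverse (chi i h) * to_induced F (i, g)" .
qed

lemma norm_to_induced:
  "\<lbrakk>i \<in> I; C \<in> lcosets (H i)\<rbrakk> \<Longrightarrow> cmod (to_induced F (i, some_elem C)) = cmod (F (coset_point (i, C)))"
  using some_elem_coset c_norm act_closed xr_in by (simp add: to_induced_def coset_point_def norm_mult)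

lemma norm_from_induced:
  "\<lbrakk>i \<in> I; C \<in> lcosets (H i); chi_covariant D i\<rbrakk> \<Longrightarrow>
     cmod (from_induced D (coset_point (i, C))) = cmod (D (i, some_elem C))"
  using some_elem_coset from_induced_orbit c_norm xr_in by (simp add: coset_point_def norm_divide)

lemma dsum_space_chi_covariant: "\<lbrakk>D \<in> dsum_space G I H chi; i \<in> I\<rbrakk> \<Longrightarrow> chi_covariant D i"
  by (simp add: dsum_space_def ind_space_def chi_covariant_def)

lemma to_induced_dsum_space:
  assumes F: "F \<in> l2 X"
  shows "to_induced F \<in> dsum_space G I H chi" and "dsum_norm G I H (to_induced F) = l2norm X F"
proof -
  let ?F = "\<lambda>x. (cmod (F x))\<^sup>2"
  let ?S = "\<lambda>i. infsum (\<lambda>C. ?F (coset_point (i, C))) (lcosets (H i))"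
  have sum: "?F summable_on X" using F by (simp add: l2_def)
  then have inner: "\<forall>i\<in>I. (\<lambda>C. ?F (coset_point (i, C))) summable_on lcosets (H i)"
    and outer: "?S summable_on I"
    using summable_on_reindex_Sigma_iff[OF bij_betw_coset_point] by auto
  have normsq: "ind_normsq G (H i) (\<lambda>x. to_induced F (i, x)) = ?S i" if "i \<in> I" for i
    unfolding ind_normsq_def some_elem_def[symmetric] using that
    by (intro infsum_cong) (simp add: norm_to_induced)
  show "to_induced F \<in> dsum_space G I H chi"
    unfolding dsum_space_def
  proof (intro CollectI conjI allI impI ballI)
    show "to_induced F (i, x) = 0" if "i \<notin> I" for i x using that by (simp add: to_induced_def)
    show "(\<lambda>i. ind_normsq G (H i) (\<lambda>x. to_induced F (i, x))) summable_on I"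
      using outer normsq by (subst summable_on_cong) auto
    fix i assume i: "i \<in> I"
    show "(\<lambda>x. to_induced F (i, x)) \<in> ind_space G (H i) (chi i)"
      unfolding ind_space_def some_elem_def[symmetric]
    proof (intro CollectI conjI allI impI ballI)
      show "to_induced F (i, g) = 0" if "g \<notin> carrier G" for g using that by (simp add: to_induced_def)
      show "to_induced F (i, g \<otimes> h) = inverse (chi i h) * to_induced F (i, g)"
        if "g \<in> carrier G" "h \<in> H i" for g h
        using that chi_covariant_to_induced[OF i] by (simp add: chi_covariant_def)
      show "(\<lambda>C. (cmod (to_induced F (i, some_elem C)))\<^sup>2) summable_on lcosets (H i)"
        using inner i by (subst summable_on_cong[where g="\<lambda>C. ?F (coset_point (i, C))"])
          (auto simp: norm_to_induced)
    qed
  qed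
  have "dsum_norm G I H (to_induced F) = sqrt (infsum ?S I)"
    unfolding dsum_norm_def using normsq by (simp cong: infsum_cong)
  also have "\<dots> = l2norm X F"
    using infsum_reindex_Sigma[OF bij_betw_coset_point sum] by (simp add: l2norm_def)
  finally show "dsum_norm G I H (to_induced F) = l2norm X F" .
qed

lemma from_induced_l2:
  assumes D: "D \<in> dsum_space G I H chi"
  shows "from_induced D \<in> l2 X"
proof -
  let ?F = "\<lambda>x. (cmod (from_induced D x))\<^sup>2"
  have F_coset: "?F (coset_point (i, C)) = (cmod (D (i, some_elem C)))\<^sup>2"
    if "i \<in> I" "C \<in> lcosets (H i)" for i C
    using that norm_from_induced dsum_space_chi_covariant[OF D] by simp
  have inner: "\<forall>i\<in>I. (\<lambda>C. ?F (coset_point (i, C))) summable_on lcosets (H i)"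
  proof
    fix i assume "i \<in> I"
    moreover have "(\<lambda>C. (cmod (D (i, some_elem C)))\<^sup>2) summable_on lcosets (H i)"
      using D \<open>i \<in> I\<close> by (simp add: dsum_space_def ind_space_def some_elem_def[symmetric])
    ultimately show "(\<lambda>C. ?F (coset_point (i, C))) summable_on lcosets (H i)"
      using F_coset by (subst summable_on_cong) auto
  qed
  have "(\<lambda>i. ind_normsq G (H i) (\<lambda>x. D (i, x))) summable_on I"
    using D by (simp add: dsum_space_def)
  then have outer: "(\<lambda>i. infsum (\<lambda>C. ?F (coset_point (i, C))) (lcosets (H i))) summable_on I"
    using F_coset by (subst summable_on_cong[where g="\<lambda>i. ind_normsq G (H i) (\<lambda>x. D (i, x))"])
      (auto simp: ind_normsq_def some_elem_def[symmetric] intro: infsum_cong)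
  have "?F summable_on X"
    using summable_on_reindex_Sigma_iff[OF bij_betw_coset_point] inner outer by simp
  then show ?thesis by (simp add: l2_def from_induced_def)
qed

lemma to_from_induced:
  assumes D: "D \<in> dsum_space G I H chi"
  shows "to_induced (from_induced D) = D"
proof (rule ext, clarify)
  fix i g
  show "to_induced (from_induced D) (i, g) = D (i, g)"
  proof (cases "i \<in> I \<and> g \<in> carrier G")
    case True
    then show ?thesis
      using from_induced_orbit dsum_space_chi_covariant[OF D] c_nonzero xr_in by (simp add: to_induced_def)
  next
    case False
    then show ?thesis using D by (auto simp: to_induced_def dsum_space_def ind_space_def)
  qed
qed

lemma from_to_induced:
  assumes F: "F \<in> l2 X"
  shows "from_induced (to_induced F) = F"
proof
  fix x
  show "from_induced (to_induced F) x = F x"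
  proof (cases "x \<in> X")
    case True
    then obtain i g where ig: "i \<in> I" "g \<in> carrier G" "x = \<phi> g (xr i)" using orbit_cover by blast
    then show ?thesis
      using from_induced_orbit[OF ig(1,2) chi_covariant_to_induced[OF ig(1)]] c_nonzero xr_in
      by (simp add: to_induced_def)
  next
    case False
    then show ?thesis using F by (simp add: from_induced_def l2_def)
  qed
qed

lemma to_induced_linear: "to_induced (\<lambda>x. a * f x + b * h x) = (\<lambda>y. a * to_induced f y + b * to_induced h y)"
  by (rule ext) (auto simp: to_induced_def algebra_simps)

lemma from_induced_linear:
  "from_induced (\<lambda>x. a * f x + b * h x) = (\<lambda>y. a * from_induced f y + b * from_induced h y)"
  by (rule ext) (auto simp: from_induced_def add_divide_distrib split: prod.split)

lemma to_induced_twisted_perm: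
  assumes g: "g \<in> carrier G"
  shows "to_induced (twisted_perm G X \<phi> c g F) = dsum_action G g (to_induced F)"
proof (rule ext, clarify)
  fix i y
  show "to_induced (twisted_perm G X \<phi> c g F) (i, y) = dsum_action G g (to_induced F) (i, y)"
  proof (cases "i \<in> I \<and> y \<in> carrier G")
    case True
    then have i: "i \<in> I" and y: "y \<in> carrier G" by auto
    have gi: "inv g \<in> carrier G" using g by simp
    note xi = xr_in[OF i]
    have "to_induced (twisted_perm G X \<phi> c g F) (i, y)
        = c y (xr i) * (c (inv g) (\<phi> y (xr i)) * F (\<phi> (inv g) (\<phi> y (xr i))))"
      using i y act_closed[OF y xi] by (simp add: to_induced_def twisted_perm_def)
    also have "\<dots> = c (inv g \<otimes> y) (xr i) * F (\<phi> (inv g \<otimes> y) (xr i))"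
      using c_mult[OF gi y xi] act_mult[OF gi y xi] by simp
    also have "\<dots> = dsum_action G g (to_induced F) (i, y)"
      using i y gi by (simp add: dsum_action_def to_induced_def)
    finally show ?thesis .
  next
    case False
    then show ?thesis by (auto simp: to_induced_def dsum_action_def)
  qed
qed

lemma chi_covariant_dsum_action:
  assumes "g \<in> carrier G" "D \<in> dsum_space G I H chi" "i \<in> I"
  shows "chi_covariant (dsum_action G g D) i"
  unfolding chi_covariant_def
proof (intro ballI)
  fix u h assume u: "u \<in> carrier G" and h: "h \<in> H i"
  have "dsum_action G g D (i, u \<otimes> h) = D (i, (inv g \<otimes> u) \<otimes> h)"
    using u H_fixes[OF assms(3) h] assms(1) by (simp add: dsum_action_def m_assoc)
  also have "\<dots> = inverse (chi i h) * D (i, inv g \<otimes> u)"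
    using dsum_space_chi_covariant[OF assms(2,3)] h u assms(1) by (simp add: chi_covariant_def)
  finally show "dsum_action G g D (i, u \<otimes> h) = inverse (chi i h) * dsum_action G g D (i, u)"
    using u by (simp add: dsum_action_def)
qed

lemma from_induced_dsum_action:
  assumes g: "g \<in> carrier G" and D: "D \<in> dsum_space G I H chi"
  shows "from_induced (dsum_action G g D) = twisted_perm G X \<phi> c g (from_induced D)"
proof
  fix x
  show "from_induced (dsum_action G g D) x = twisted_perm G X \<phi> c g (from_induced D) x"
  proof (cases "x \<in> X")
    case False
    then show ?thesis by (simp add: from_induced_def twisted_perm_def)
  next
    case True
    then obtain i y where iy: "i \<in> I" "y \<in> carrier G" "x = \<phi> y (xr i)" using orbit_cover by blast
    have gi: "inv g \<in> carrier G" using g by simp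
    note xi = xr_in[OF iy(1)]
    have "from_induced (dsum_action G g D) x = D (i, inv g \<otimes> y) / c y (xr i)"
      using from_induced_orbit[OF iy(1,2) chi_covariant_dsum_action[OF g D iy(1)]] iy
      by (simp add: dsum_action_def)
    also have "\<dots> = c (inv g) x * (D (i, inv g \<otimes> y) / c (inv g \<otimes> y) (xr i))"
      using c_mult[OF gi iy(2) xi] c_nonzero[OF gi True] c_nonzero[OF iy(2) xi] iy(3)
      by (simp add: field_simps)
    also have "\<dots> = c (inv g) x * from_induced D (\<phi> (inv g \<otimes> y) (xr i))"
      using from_induced_orbit[OF iy(1) _ dsum_space_chi_covariant[OF D iy(1)]] gi iy by simp
    also have "\<dots> = twisted_perm G X \<phi> c g (from_induced D) x"
      using True act_mult[OF gi iy(2) xi] iy by (simp add: twisted_perm_def)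
    finally show ?thesis .
  qed
qed

lemma bij_betw_to_induced: "bij_betw to_induced (l2 X) (dsum_space G I H chi)"
  by (rule bij_betw_byWitness[where f'=from_induced])
    (auto simp: from_to_induced to_from_induced to_induced_dsum_space from_induced_l2)

lemma twisted_perm_equiv_dsum:
  "unitarily_equivalent G (l2 X) (l2norm X) (twisted_perm G X \<phi> c)
     (dsum_space G I H chi) (dsum_norm G I H) (dsum_action G)"
  unfolding unitarily_equivalent_def
  using bij_betw_to_induced to_induced_linear to_induced_dsum_space(2) to_induced_twisted_perm
  by blast

lemma dsum_equiv_twisted_perm:
  "unitarily_equivalent G (dsum_space G I H chi) (dsum_norm G I H) (dsum_action G)
     (l2 X) (l2norm X) (twisted_perm G X \<phi> c)"
  unfolding unitarily_equivalent_def
proof (intro exI[of _ from_induced] conjI ballI allI)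
  show "bij_betw from_induced (dsum_space G I H chi) (l2 X)"
    by (rule bij_betw_byWitness[where f'=to_induced])
      (auto simp: from_to_induced to_from_induced to_induced_dsum_space from_induced_l2)
  show "l2norm X (from_induced D) = dsum_norm G I H D" if "D \<in> dsum_space G I H chi" for D
    using that by (metis to_from_induced to_induced_dsum_space(2) from_induced_l2)
qed (simp_all add: from_induced_linear from_induced_dsum_action)

end

lemma open_subgroup_stabilizer:
  assumes tg: "topological_group G T" and act: "continuous_action G T X \<phi>" and x: "x \<in> X"
  shows "open_subgroup G T (stabilizer G \<phi> x)"
proof -
  have "continuous_map (prod_topology T (discrete_topology X)) (discrete_topology X) (\<lambda>(g, x). \<phi> g x)"
    using act by (simp add: continuous_action_def)
  then have "continuous_map T (discrete_topology X) (\<lambda>g. \<phi> g x)"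
    using x by (rule continuous_map_fix_discrete_snd)
  then have "openin T {g \<in> topspace T. \<phi> g x \<in> {x}}"
    by (rule openin_continuous_map_preimage) (use x in simp)
  moreover have "subgroup (stabilizer G \<phi> x) G"
    using tg act x group.stabilizer_subgroup
    by (fastforce simp: topological_group_def continuous_action_def)
  ultimately show ?thesis
    using tg by (simp add: open_subgroup_def stabilizer_def topological_group_def)
qed

lemma unitary_character_stabilizer:
  assumes tg: "topological_group G T" and act: "is_action G X \<phi>"
    and coc: "continuous_cocycle G T X \<phi> c" and x: "x \<in> X"
  shows "unitary_character G T (stabilizer G \<phi> x) (\<lambda>h. inverse (c h x))"
  unfolding unitary_character_def
proof (intro conjI ballI)
  have cocycle: "cocycle G X \<phi> c" using coc by (simp add: continuous_cocycle_def)
  show "cmod (inverse (c h x)) = 1" if "h \<in> stabilizer G \<phi> x" for h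
    using that cocycle_norm[OF cocycle _ x] by (simp add: stabilizer_def norm_inverse)
  show "inverse (c (h1 \<otimes>\<^bsub>G\<^esub> h2) x) = inverse (c h1 x) * inverse (c h2 x)"
    if "h1 \<in> stabilizer G \<phi> x" "h2 \<in> stabilizer G \<phi> x" for h1 h2
    using that cocycle_mult[OF cocycle _ _ x] by (simp add: stabilizer_def)
  have "continuous_map (prod_topology T (discrete_topology X)) euclidean (\<lambda>(g, x). c g x)"
    using coc by (simp add: continuous_cocycle_def)
  then have "continuous_map T euclidean (\<lambda>g. c g x)"
    using x by (rule continuous_map_fix_discrete_snd)
  moreover have "c g x \<noteq> 0" if "g \<in> topspace T" for g
    using that tg cocycle_nonzero[OF cocycle _ x] by (simp add: topological_group_def)
  ultimately have "continuous_map T euclidean (\<lambda>g. inverse (c g x))"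
    unfolding continuous_map_atin limitin_canonical_iff by (metis tendsto_inverse)
  then show "continuous_map (subtopology T (stabilizer G \<phi> x)) euclidean (\<lambda>h. inverse (c h x))"
    by (rule continuous_map_from_subtopology)
qed

lemma twisted_perm_monomial_decomposition:
  fixes X :: "'x set"
  assumes tg: "topological_group G T"
    and act: "continuous_action G T X \<phi>" and coc: "continuous_cocycle G T X \<phi> c"
  shows "\<exists>(I :: 'x set) H chi.
          (\<forall>i\<in>I. open_subgroup G T (H i) \<and> unitary_character G T (H i) (chi i)) \<and>
          unitarily_equivalent G (l2 X) (l2norm X) (twisted_perm G X \<phi> c)
            (dsum_space G I H chi) (dsum_norm G I H) (dsum_action G)"
proof -
  interpret group G using tg by (simp add: topological_group_def)
  have action: "is_action G X \<phi>" using act by (simp add: continuous_action_def)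
  obtain I where I: "I \<subseteq> X"
    and cover: "\<And>x. x \<in> X \<Longrightarrow> \<exists>i\<in>I. \<exists>g\<in>carrier G. x = \<phi> g i"
    and disjoint: "\<And>i j g. \<lbrakk>i \<in> I; j \<in> I; g \<in> carrier G; \<phi> g i = j\<rbrakk> \<Longrightarrow> i = j"
    using orbit_representatives[OF action] by blast
  have cocycle: "cocycle G X \<phi> c" using coc by (simp add: continuous_cocycle_def)
  interpret orbit_decomposition G X \<phi> c I id "stabilizer G \<phi>" "\<lambda>i h. inverse (c h i)"
    using action cocycle I cover disjoint by unfold_locales auto
  have "open_subgroup G T (stabilizer G \<phi> i) \<and>
      unitary_character G T (stabilizer G \<phi> i) (\<lambda>h. inverse (c h i))" if "i \<in> I" for i
    using that I open_subgroup_stabilizer[OF tg act] unitary_character_stabilizer[OF tg action coc]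
    by blast
  with twisted_perm_equiv_dsum show ?thesis
    by (intro exI[where x=I] exI[where x="stabilizer G \<phi>"] exI[where x="\<lambda>i h. inverse (c h i)"])
      blast
qed

definition coset_section :: "('g, 'b) monoid_scheme \<Rightarrow> 'g set \<Rightarrow> 'g set \<Rightarrow> 'g" where
  "coset_section G H C = (if C = H then \<one>\<^bsub>G\<^esub> else some_elem C)"

definition section_cocycle :: "('g, 'b) monoid_scheme \<Rightarrow> ('g set \<Rightarrow> 'g) \<Rightarrow> 'g \<Rightarrow> 'g set \<Rightarrow> 'g" where
  "section_cocycle G s g C = inv\<^bsub>G\<^esub> (s (g <#\<^bsub>G\<^esub> C)) \<otimes>\<^bsub>G\<^esub> g \<otimes>\<^bsub>G\<^esub> s C"

definition induced_cocycle ::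
  "('g, 'b) monoid_scheme \<Rightarrow> ('i \<Rightarrow> 'g set) \<Rightarrow> ('i \<Rightarrow> 'g \<Rightarrow> complex) \<Rightarrow> 'g \<Rightarrow> 'i \<times> 'g set \<Rightarrow> complex"
  where "induced_cocycle G H chi g p =
    inverse (chi (fst p) (section_cocycle G (coset_section G (H (fst p))) g (snd p)))"

context group
begin

lemma coset_section_in:
  assumes "subgroup H G" "C \<in> lcosets H"
  shows "coset_section G H C \<in> C"
  using assms some_elem_lcosets subgroup.one_closed by (auto simp: coset_section_def)

lemma section_cocycle_in:
  assumes H: "subgroup H G" and s: "\<And>C. C \<in> lcosets H \<Longrightarrow> s C \<in> C"
    and g: "g \<in> carrier G" and C: "C \<in> lcosets H"
  shows "section_cocycle G s g C \<in> H"
proof -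
  have gC: "g <# C \<in> lcosets H" using l_coset_in_lcosets[OF H g C] .
  note sC = lcosets_repr[OF H C s[OF C]] and sgC = lcosets_repr[OF H gC s[OF gC]]
  have "g \<otimes> s C \<in> g <# C" using s[OF C] by (auto simp: l_coset_def)
  then have "inv (s (g <# C)) \<otimes> (g \<otimes> s C) \<in> H"
    using subgroup.lcos_module_imp[OF H is_group sgC(1)] sgC(2) by simp
  then show ?thesis using g sC(1) sgC(1) by (simp add: section_cocycle_def m_assoc)
qed

lemma section_cocycle_mult:
  assumes H: "subgroup H G" and s: "\<And>C. C \<in> lcosets H \<Longrightarrow> s C \<in> C"
    and g1: "g1 \<in> carrier G" and g2: "g2 \<in> carrier G" and C: "C \<in> lcosets H"
  shows "section_cocycle G s (g1 \<otimes> g2) C = section_cocycle G s g1 (g2 <# C) \<otimes> section_cocycle G s g2 C"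
proof -
  have g2C: "g2 <# C \<in> lcosets H" and g12C: "g1 <# (g2 <# C) \<in> lcosets H"
    using l_coset_in_lcosets H g1 g2 C by blast+
  have assoc: "(g1 \<otimes> g2) <# C = g1 <# (g2 <# C)"
    using lcos_m_assoc subgroup.lcosets_carrier[OF H is_group C] g1 g2 by simp
  have "s C \<in> carrier G" "s (g2 <# C) \<in> carrier G" "s (g1 <# (g2 <# C)) \<in> carrier G"
    using lcosets_repr(1)[OF H] s C g2C g12C by blast+
  with g1 g2 show ?thesis
    unfolding section_cocycle_def assoc by (simp add: m_assoc) (simp add: m_assoc[symmetric])
qed

lemma section_cocycle_coset_section_self:
  assumes "subgroup H G" "h \<in> H"
  shows "section_cocycle G (coset_section G H) h H = h"
proof -
  have "h \<in> carrier G" using assms subgroup.subset by blast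
  moreover have "h <# H = H" using coset_join3 assms calculation by blast
  ultimately show ?thesis by (simp add: section_cocycle_def coset_section_def)
qed

lemma is_action_coset_action:
  assumes H: "\<And>i. i \<in> I \<Longrightarrow> subgroup (H i) G"
  shows "is_action G (coset_union G I H) (coset_action G)"
  unfolding is_action_def coset_union_def coset_action_def
  using l_coset_in_lcosets[OF H] lcos_mult_one lcos_m_assoc subgroup.lcosets_carrier[OF H is_group]
  by auto

lemma cocycle_induced_cocycle:
  assumes H: "\<And>i. i \<in> I \<Longrightarrow> subgroup (H i) G"
    and chi: "\<And>i. i \<in> I \<Longrightarrow> unitary_character G T (H i) (chi i)"
  shows "cocycle G (coset_union G I H) (coset_action G) (induced_cocycle G H chi)"
  unfolding cocycle_def
proof (intro conjI ballI)
  fix g p assume g: "g \<in> carrier G" and p: "p \<in> coset_union G I H"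
  then obtain i C where p': "p = (i, C)" "i \<in> I" "C \<in> lcosets (H i)" by (auto simp: coset_union_def)
  have "section_cocycle G (coset_section G (H i)) g C \<in> H i"
    using section_cocycle_in[OF H[OF p'(2)] coset_section_in[OF H[OF p'(2)]] g p'(3)] .
  with chi[OF p'(2)] show "cmod (induced_cocycle G H chi g p) = 1"
    by (simp add: induced_cocycle_def unitary_character_def p' norm_inverse)
next
  fix g1 g2 p assume g: "g1 \<in> carrier G" "g2 \<in> carrier G" and p: "p \<in> coset_union G I H"
  then obtain i C where p': "p = (i, C)" "i \<in> I" "C \<in> lcosets (H i)" by (auto simp: coset_union_def)
  let ?k = "section_cocycle G (coset_section G (H i))"
  have s: "\<And>C. C \<in> lcosets (H i) \<Longrightarrow> coset_section G (H i) C \<in> C"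
    using coset_section_in[OF H[OF p'(2)]] .
  have "?k g1 (g2 <# C) \<in> H i" "?k g2 C \<in> H i"
    using section_cocycle_in[OF H[OF p'(2)] s] l_coset_in_lcosets[OF H[OF p'(2)]] g p'(3) by blast+
  with chi[OF p'(2)] have "chi i (?k g1 (g2 <# C) \<otimes> ?k g2 C) = chi i (?k g1 (g2 <# C)) * chi i (?k g2 C)"
    by (simp add: unitary_character_def)
  then show "induced_cocycle G H chi (g1 \<otimes> g2) p
      = induced_cocycle G H chi g1 (coset_action G g2 p) * induced_cocycle G H chi g2 p"
    using section_cocycle_mult[OF H[OF p'(2)] s g p'(3)]
    by (simp add: induced_cocycle_def coset_action_def p')
qed

lemma stabilizer_coset_action:
  assumes "subgroup H G"
  shows "stabilizer G (coset_action G) (i, H) = H"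
proof -
  have "g <# H = H \<longleftrightarrow> g \<in> H" if "g \<in> carrier G" for g
    using that assms lcos_self[of g H] coset_join3[of g H] by auto
  then show ?thesis
    using subgroup.subset[OF assms] by (auto simp: stabilizer_def coset_action_def)
qed

end

lemma monomial_sum_as_twisted_perm:
  fixes G :: "('g, 'b) monoid_scheme" (structure)
  assumes "group G"
    and H: "\<And>i. i \<in> I \<Longrightarrow> subgroup (H i) G"
    and chi: "\<And>i. i \<in> I \<Longrightarrow> unitary_character G T (H i) (chi i)"
  shows "\<exists>c. cocycle G (coset_union G I H) (coset_action G) c \<and>
          unitarily_equivalent G (dsum_space G I H chi) (dsum_norm G I H) (dsum_action G)
            (l2 (coset_union G I H)) (l2norm (coset_union G I H))
            (twisted_perm G (coset_union G I H) (coset_action G) c)"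
proof -
  interpret group G by fact
  note cocycle = cocycle_induced_cocycle[OF H chi]
  have base_point: "(i, H i) \<in> coset_union G I H" if "i \<in> I" for i
    using that lcos_mult_one[OF subgroup.subset[OF H[OF that]]]
    by (auto simp: coset_union_def LCOSETS_def intro!: bexI[of _ \<one>])
  have cover: "\<exists>i\<in>I. \<exists>g\<in>carrier G. p = coset_action G g (i, H i)" if "p \<in> coset_union G I H" for p
    using that by (auto simp: coset_union_def coset_action_def LCOSETS_def)
  have chi_induced: "chi i h = inverse (induced_cocycle G H chi h (i, H i))" if "i \<in> I" "h \<in> H i" for i h
    using section_cocycle_coset_section_self[OF H[OF that(1)] that(2)] by (simp add: induced_cocycle_def)
  interpret orbit_decomposition G "coset_union G I H" "coset_action G" "induced_cocycle G H chi"
    I "\<lambda>i. (i, H i)" H chi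
    using is_action_coset_action[OF H] cocycle base_point cover chi_induced
      stabilizer_coset_action[OF H, symmetric]
    by unfold_locales (simp_all add: coset_action_def)
  show ?thesis using cocycle dsum_equiv_twisted_perm by blast
qed

theorem corollary2p3:
  fixes G :: "('g, 'b) monoid_scheme" and T :: "'g topology"
  assumes "topological_group G T"
  shows
   "(\<forall>(X :: 'x set) \<phi> c.
       continuous_action G T X \<phi> \<and> continuous_cocycle G T X \<phi> c \<longrightarrow>
       (\<exists>(I :: 'x set) H chi.
          (\<forall>i\<in>I. open_subgroup G T (H i) \<and> unitary_character G T (H i) (chi i)) \<and>
          unitarily_equivalent G
            (l2 X) (l2norm X) (twisted_perm G X \<phi> c)
            (dsum_space G I H chi) (dsum_norm G I H) (dsum_action G)))
    \<and>
    (\<forall>(I :: 'i set) H chi.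
       (\<forall>i\<in>I. open_subgroup G T (H i) \<and> unitary_character G T (H i) (chi i)) \<longrightarrow>
       (\<exists>c. cocycle G (coset_union G I H) (coset_action G) c \<and>
          unitarily_equivalent G
            (dsum_space G I H chi) (dsum_norm G I H) (dsum_action G)
            (l2 (coset_union G I H)) (l2norm (coset_union G I H))
            (twisted_perm G (coset_union G I H) (coset_action G) c)))"
proof (intro conjI allI impI)
  fix X :: "'x set" and \<phi> c
  assume "continuous_action G T X \<phi> \<and> continuous_cocycle G T X \<phi> c"
  then show "\<exists>(I :: 'x set) H chi.
          (\<forall>i\<in>I. open_subgroup G T (H i) \<and> unitary_character G T (H i) (chi i)) \<and>
          unitarily_equivalent G (l2 X) (l2norm X) (twisted_perm G X \<phi> c)
            (dsum_space G I H chi) (dsum_norm G I H) (dsum_action G)"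
    using twisted_perm_monomial_decomposition[OF assms] by blast
next
  fix I :: "'i set" and H chi
  assume "\<forall>i\<in>I. open_subgroup G T (H i) \<and> unitary_character G T (H i) (chi i)"
  then show "\<exists>c. cocycle G (coset_union G I H) (coset_action G) c \<and>
          unitarily_equivalent G (dsum_space G I H chi) (dsum_norm G I H) (dsum_action G)
            (l2 (coset_union G I H)) (l2norm (coset_union G I H))
            (twisted_perm G (coset_union G I H) (coset_action G) c)"
    using assms by (intro monomial_sum_as_twisted_perm)
      (auto simp: topological_group_def open_subgroup_def)
qed

end
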